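(* Let $X$ be a finite $T_0$-space. If $x_i\in X$ is a weak beat point, then $\det(X_M)=-\det\big((X\setminus\{x_i\})_M\big)$.
   Context: A finite $T_0$-space is identified with a finite poset via $x\le y$ iff $U_x\subseteq U_y$, where $U_x$ is the minimal open set containing $x$; subsets carry the induced order/subspace topology. For a labelling $X=\{x_1,\dots,x_n\}$, $X_M=(x_{i,j})$ is the $n\times n$ matrix with $x_{i,j}=0$ if $x_i\le x_j$ and $x_{i,j}=1$ otherwise; its determinant does not depend on the labelling. Let $\hat U_x=\{y: y<x\}$ and $\hat F_x=\{y:y>x\}$. A point $x$ is a down weak beat point if $\hat U_x$ is contractible, an up weak beat point if $\hat F_x$ is contractible, and a weak beat point if it is either. *)

theory Defs
  imports "HOL-Analysis.Homotopy" "Jordan_Normal_Form.Determinant"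
begin

text \<open>A finite T0-space is identified with a finite poset (X, leq). Its topology is the
  Alexandrov topology: open sets are the down-closed subsets of X (so that the minimal
  open set of x is U_x = {y. leq y x}).\<close>

definition finite_poset :: "'a set \<Rightarrow> ('a \<Rightarrow> 'a \<Rightarrow> bool) \<Rightarrow> bool" where
  "finite_poset X leq \<longleftrightarrow> finite X \<and>
     (\<forall>x\<in>X. leq x x) \<and>
     (\<forall>x\<in>X. \<forall>y\<in>X. leq x y \<and> leq y x \<longrightarrow> x = y) \<and>
     (\<forall>x\<in>X. \<forall>y\<in>X. \<forall>z\<in>X. leq x y \<and> leq y z \<longrightarrow> leq x z)"

definition poset_topology :: "'a set \<Rightarrow> ('a \<Rightarrow> 'a \<Rightarrow> bool) \<Rightarrow> 'a topology" where
  "poset_topology X leq = topology (\<lambda>U. U \<subseteq> X \<and> (\<forall>y\<in>U. \<forall>z\<in>X. leq z y \<longrightarrow> z \<in> U))"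

definition hatU :: "'a set \<Rightarrow> ('a \<Rightarrow> 'a \<Rightarrow> bool) \<Rightarrow> 'a \<Rightarrow> 'a set" where
  "hatU X leq x = {y\<in>X. leq y x \<and> y \<noteq> x}"

definition hatF :: "'a set \<Rightarrow> ('a \<Rightarrow> 'a \<Rightarrow> bool) \<Rightarrow> 'a \<Rightarrow> 'a set" where
  "hatF X leq x = {y\<in>X. leq x y \<and> y \<noteq> x}"

text \<open>Contractible in the sense of finite spaces: nonempty and homotopy equivalent to a point.
  (HOL's contractible_space also counts the empty space as contractible, which is excluded.)\<close>
definition contractible_sub :: "'a set \<Rightarrow> ('a \<Rightarrow> 'a \<Rightarrow> bool) \<Rightarrow> 'a set \<Rightarrow> bool" where
  "contractible_sub X leq A \<longleftrightarrow> A \<noteq> {} \<and> contractible_space (subtopology (poset_topology X leq) A)"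

definition down_weak_beat_point :: "'a set \<Rightarrow> ('a \<Rightarrow> 'a \<Rightarrow> bool) \<Rightarrow> 'a \<Rightarrow> bool" where
  "down_weak_beat_point X leq x \<longleftrightarrow> x \<in> X \<and> contractible_sub X leq (hatU X leq x)"

definition up_weak_beat_point :: "'a set \<Rightarrow> ('a \<Rightarrow> 'a \<Rightarrow> bool) \<Rightarrow> 'a \<Rightarrow> bool" where
  "up_weak_beat_point X leq x \<longleftrightarrow> x \<in> X \<and> contractible_sub X leq (hatF X leq x)"

definition weak_beat_point :: "'a set \<Rightarrow> ('a \<Rightarrow> 'a \<Rightarrow> bool) \<Rightarrow> 'a \<Rightarrow> bool" where
  "weak_beat_point X leq x \<longleftrightarrow> down_weak_beat_point X leq x \<or> up_weak_beat_point X leq x"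

definition poset_matrix :: "('a \<Rightarrow> 'a \<Rightarrow> bool) \<Rightarrow> nat \<Rightarrow> (nat \<Rightarrow> 'a) \<Rightarrow> int mat" where
  "poset_matrix leq n f = Matrix.mat n n (\<lambda>(i,j). if leq (f i) (f j) then 0 else 1)"

end

theory Submission
  imports Defs
begin

text \<open>Write \<open>\<chi>(X)\<close> for the sum of \<open>(-1)^|c|\<close> over all chains \<open>c\<close> of \<open>X\<close>, the empty chain
  included. Expanding the Leibniz formula for the matrix with entries \<open>1 - [x\<^sub>i \<le> x\<^sub>j]\<close> gives
  \<open>det X\<^sub>M = (-1)^|X| \<chi>(X)\<close>. Splitting the chains through \<open>x\<close> at \<open>x\<close> gives
  \<open>\<chi>(X) = \<chi>(X - {x}) - \<chi>(\<hat>U\<^sub>x) \<chi>(\<hat>F\<^sub>x)\<close>. Finally \<open>\<chi>\<close> vanishes on contractible finite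
  spaces: a contraction yields a fence of comparable maps from the identity to a constant, and
  removing beat points one at a time along such a fence, which preserves \<open>\<chi>\<close>, reduces the space
  to a point. So if \<open>x\<close> is a weak beat point, \<open>\<chi>(X) = \<chi>(X - {x})\<close>, while \<open>|X|\<close> drops by one.\<close>

lemma finite_poset_finite: "finite_poset X R \<Longrightarrow> finite X"
  unfolding finite_poset_def by blast

lemma finite_poset_refl: "finite_poset X R \<Longrightarrow> x \<in> X \<Longrightarrow> R x x"
  unfolding finite_poset_def by blast

lemma finite_poset_antisym:
  "finite_poset X R \<Longrightarrow> x \<in> X \<Longrightarrow> y \<in> X \<Longrightarrow> R x y \<Longrightarrow> R y x \<Longrightarrow> x = y"
  unfolding finite_poset_def by blast

lemma finite_poset_trans:
  "finite_poset X R \<Longrightarrow> x \<in> X \<Longrightarrow> y \<in> X \<Longrightarrow> z \<in> X \<Longrightarrow> R x y \<Longrightarrow> R y z \<Longrightarrow> R x z"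
  unfolding finite_poset_def by blast

lemma finite_poset_subset: "finite_poset X R \<Longrightarrow> Y \<subseteq> X \<Longrightarrow> finite_poset Y R"
  unfolding finite_poset_def by (simp add: finite_subset subset_iff) blast

lemma finite_poset_conversep [simp]: "finite_poset X R\<inverse>\<inverse> \<longleftrightarrow> finite_poset X R"
  unfolding finite_poset_def conversep_iff by blast

lemma finite_poset_bij_betw:
  assumes f: "bij_betw f I X" and po: "finite_poset X R"
  shows "finite_poset I (\<lambda>i j. R (f i) (f j))"
proof -
  have "finite I" using f po bij_betw_finite finite_poset_finite by blast
  moreover have "f i \<in> X" if "i \<in> I" for i using f that bij_betwE by blast
  moreover have "inj_on f I" using f bij_betw_imp_inj_on by blast
  ultimately show ?thesis
    using po unfolding finite_poset_def inj_on_def by meson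
qed

definition order_chains :: "('a \<Rightarrow> 'a \<Rightarrow> bool) \<Rightarrow> 'a set \<Rightarrow> 'a set set" where
  "order_chains R B = {c. c \<subseteq> B \<and> (\<forall>x\<in>c. \<forall>y\<in>c. R x y \<or> R y x)}"

text \<open>Minus the reduced Euler characteristic of the order complex of \<open>B\<close>: the empty chain
  counts as well.\<close>
definition chain_sum :: "('a \<Rightarrow> 'a \<Rightarrow> bool) \<Rightarrow> 'a set \<Rightarrow> int" where
  "chain_sum R B = (\<Sum>c\<in>order_chains R B. (-1) ^ card c)"

lemma finite_order_chains: "finite B \<Longrightarrow> finite (order_chains R B)"
  by (rule finite_subset[of _ "Pow B"]) (auto simp: order_chains_def)

lemma order_chains_conversep [simp]: "order_chains R\<inverse>\<inverse> B = order_chains R B"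
  unfolding order_chains_def by blast

lemma chain_sum_conversep [simp]: "chain_sum R\<inverse>\<inverse> B = chain_sum R B"
  by (simp add: chain_sum_def)

lemma chain_sum_bij_betw:
  assumes f: "bij_betw f I X"
  shows "chain_sum (\<lambda>i j. R (f i) (f j)) I = chain_sum R X"
  unfolding chain_sum_def
proof (rule sum.reindex_bij_witness[of _ "\<lambda>d. {i\<in>I. f i \<in> d}" "(`) f"])
  fix c assume c: "c \<in> order_chains (\<lambda>i j. R (f i) (f j)) I"
  then have "c \<subseteq> I" by (simp add: order_chains_def)
  moreover have "inj_on f I" using f bij_betw_imp_inj_on by blast
  ultimately show "{i \<in> I. f i \<in> f ` c} = c" and "(-1) ^ card (f ` c) = (-1::int) ^ card c"
    by (auto simp: inj_on_def card_image[OF inj_on_subset])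
  show "f ` c \<in> order_chains R X" using c f by (auto simp: order_chains_def bij_betw_def)
next
  fix d assume "d \<in> order_chains R X"
  then show "f ` {i \<in> I. f i \<in> d} = d" and "{i \<in> I. f i \<in> d} \<in> order_chains (\<lambda>i j. R (f i) (f j)) I"
    using f by (auto simp: order_chains_def bij_betw_def)
qed

text \<open>Adding and removing \<open>m\<close> is a sign-reversing involution on the chains.\<close>
lemma chain_sum_cone:
  assumes fin: "finite B" and m: "m \<in> B" and cmp: "\<forall>z\<in>B. R z m \<or> R m z"
  shows "chain_sum R B = 0"
proof -
  let ?C0 = "{c\<in>order_chains R B. m \<notin> c}"
  let ?C1 = "{c\<in>order_chains R B. m \<in> c}"
  have fin_C: "finite ?C0" "finite ?C1" using finite_order_chains[OF fin] by auto
  have C1: "?C1 = insert m ` ?C0"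
  proof
    show "?C1 \<subseteq> insert m ` ?C0"
    proof
      fix c assume c: "c \<in> ?C1"
      then have "c - {m} \<in> ?C0" and "c = insert m (c - {m})" by (auto simp: order_chains_def)
      then show "c \<in> insert m ` ?C0" by blast
    qed
    show "insert m ` ?C0 \<subseteq> ?C1" using cmp m by (auto simp: order_chains_def)
  qed
  have "order_chains R B = ?C0 \<union> ?C1" by blast
  then have "chain_sum R B = (\<Sum>c\<in>?C0. (-1) ^ card c) + (\<Sum>c\<in>?C1. (-1) ^ card c)"
    unfolding chain_sum_def using fin_C by (simp add: sum.union_disjoint[symmetric] Int_def)
  moreover have "inj_on (insert m) ?C0"
    by (rule inj_onI) (metis (no_types, lifting) mem_Collect_eq insert_ident)
  then have "(\<Sum>c\<in>?C1. (-1::int) ^ card c) = (\<Sum>c\<in>?C0. - ((-1) ^ card c))"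
    unfolding C1 using fin
    by (subst sum.reindex) (auto simp: order_chains_def intro!: sum.cong dest: finite_subset)
  ultimately show ?thesis by (simp add: sum_negf)
qed

text \<open>A chain through \<open>x\<close> is \<open>x\<close> together with a chain below \<open>x\<close> and a chain above \<open>x\<close>.\<close>
lemma sum_chains_through_point:
  assumes po: "finite_poset X R" and x: "x \<in> X"
  shows "(\<Sum>c | c \<in> order_chains R X \<and> x \<in> c. (-1::int) ^ card c) =
    - (chain_sum R (hatU X R x) * chain_sum R (hatF X R x))"
proof -
  let ?U = "hatU X R x" and ?F = "hatF X R x"
  let ?C = "{c\<in>order_chains R X. x \<in> c}"
  have fin: "finite X" using po finite_poset_finite by blast
  have disj: "?U \<inter> ?F = {}" "x \<notin> ?U" "x \<notin> ?F"
    using finite_poset_antisym[OF po _ x] by (auto simp: hatU_def hatF_def)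
  have UF: "R u v" if "u \<in> ?U" "v \<in> ?F" for u v
    using that finite_poset_trans[OF po _ x] by (auto simp: hatU_def hatF_def)
  have "(\<Sum>c\<in>?C. (-1) ^ card c) =
      (\<Sum>(L, G)\<in>order_chains R ?U \<times> order_chains R ?F. - ((-1) ^ card L * (-1::int) ^ card G))"
  proof (rule sum.reindex_bij_witness[of _ "\<lambda>(L, G). insert x (L \<union> G)" "\<lambda>c. (c \<inter> ?U, c \<inter> ?F)"])
    fix c assume c: "c \<in> ?C"
    then have "c \<subseteq> insert x (?U \<union> ?F)"
      by (auto simp: order_chains_def hatU_def hatF_def)
    then have c_eq: "insert x (c \<inter> ?U \<union> c \<inter> ?F) = c" using c by blast
    then show "(\<lambda>(L, G). insert x (L \<union> G)) (c \<inter> ?U, c \<inter> ?F) = c" by simp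
    show "(c \<inter> ?U, c \<inter> ?F) \<in> order_chains R ?U \<times> order_chains R ?F"
      using c by (auto simp: order_chains_def)
    have "finite (c \<inter> ?U)" "finite (c \<inter> ?F)" using fin by (auto simp: hatU_def hatF_def)
    then have "card c = Suc (card (c \<inter> ?U) + card (c \<inter> ?F))"
      using disj by (subst c_eq[symmetric]) (simp add: card_Un_disjoint disjoint_iff)
    then show "(case (c \<inter> ?U, c \<inter> ?F) of (L, G) \<Rightarrow> - ((-1) ^ card L * (-1::int) ^ card G)) = (-1) ^ card c"
      by (simp add: power_add)
  next
    fix p assume p: "p \<in> order_chains R ?U \<times> order_chains R ?F"
    obtain L G where LG: "p = (L, G)" "L \<in> order_chains R ?U" "G \<in> order_chains R ?F"
      using p by blast
    then have sub: "L \<subseteq> ?U" "G \<subseteq> ?F" by (simp_all add: order_chains_def)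
    then show "(\<lambda>c. (c \<inter> ?U, c \<inter> ?F)) ((\<lambda>(L, G). insert x (L \<union> G)) p) = p"
      using disj LG(1) by blast
    have "R a b \<or> R b a" if "a \<in> insert x (L \<union> G)" "b \<in> insert x (L \<union> G)" for a b
    proof -
      have "R a b \<or> R b a" if "a \<in> insert x (L \<union> G)" "b \<in> G" for a b
        using that sub LG(3) UF unfolding order_chains_def hatF_def by blast
      moreover have "R a b \<or> R b a" if "a \<in> insert x L" "b \<in> insert x L" for a b
        using that sub LG(2) finite_poset_refl[OF po x] by (auto simp: order_chains_def hatU_def)
      ultimately show ?thesis using that by blast
    qed
    moreover have "insert x (L \<union> G) \<subseteq> X" using sub x by (auto simp: hatU_def hatF_def)
    ultimately show "(\<lambda>(L, G). insert x (L \<union> G)) p \<in> ?C"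
      using LG(1) by (simp add: order_chains_def)
  qed
  also have "\<dots> = - (chain_sum R ?U * chain_sum R ?F)"
    unfolding chain_sum_def sum_product sum.cartesian_product by (simp add: case_prod_beta sum_negf)
  finally show ?thesis .
qed

lemma chain_sum_remove_point:
  assumes po: "finite_poset X R" and x: "x \<in> X"
  shows "chain_sum R X = chain_sum R (X - {x}) - chain_sum R (hatU X R x) * chain_sum R (hatF X R x)"
proof -
  let ?C = "{c\<in>order_chains R X. x \<in> c}"
  have split: "order_chains R X = order_chains R (X - {x}) \<union> ?C"
    by (auto simp: order_chains_def)
  have "chain_sum R X = (\<Sum>c\<in>order_chains R (X - {x}) \<union> ?C. (-1) ^ card c)"
    by (simp only: chain_sum_def split[symmetric])
  also have "\<dots> = chain_sum R (X - {x}) + (\<Sum>c\<in>?C. (-1) ^ card c)"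
    unfolding chain_sum_def using finite_poset_finite[OF po]
    by (intro sum.union_disjoint) (auto simp: finite_order_chains order_chains_def)
  finally show ?thesis using sum_chains_through_point[OF po x] by simp
qed

lemma finite_chain_has_greatest:
  assumes po: "finite_poset X R" and c: "c \<in> order_chains R X" and ne: "c \<noteq> {}"
  shows "\<exists>a\<in>c. \<forall>y\<in>c. R y a"
proof -
  have "finite c" using c po finite_poset_finite finite_subset by (auto simp: order_chains_def)
  then show ?thesis using ne c
  proof (induction c rule: finite_ne_induct)
    case (singleton a)
    then show ?case by (simp add: order_chains_def finite_poset_refl[OF po])
  next
    case (insert a c)
    then obtain m where m: "m \<in> c" "\<forall>y\<in>c. R y m" by (auto simp: order_chains_def)
    show ?case
    proof (cases "R m a")
      case True
      have "a \<in> X" "m \<in> X" "c \<subseteq> X" using insert.prems m by (auto simp: order_chains_def)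
      then have "R y a" if "y \<in> c" for y
        using that m True finite_poset_trans[OF po] by blast
      moreover have "R a a" using \<open>a \<in> X\<close> finite_poset_refl[OF po] by blast
      ultimately show ?thesis by blast
    next
      case False
      then have "R a m" using m insert.prems by (auto simp: order_chains_def)
      then show ?thesis using m by blast
    qed
  qed
qed

lemma bij_betw_insert_greatest:
  assumes po: "finite_poset B R"
  shows "bij_betw (\<lambda>(a, c). insert a c) (SIGMA a:B. order_chains R (hatU B R a))
    (order_chains R B - {{}})"
  unfolding bij_betw_def
proof
  let ?S = "SIGMA a:B. order_chains R (hatU B R a)"
  let ?N = "order_chains R B - {{}}"
  let ?g = "\<lambda>(a, c). insert a c"
  show "inj_on ?g ?S"
  proof (rule inj_onI, clarsimp)
    fix a c a' c'
    assume a: "a \<in> B" "c \<in> order_chains R (hatU B R a)"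
      and a': "a' \<in> B" "c' \<in> order_chains R (hatU B R a')" and eq: "insert a c = insert a' c'"
    have "a \<notin> c" "a' \<notin> c'" using a a' by (auto simp: order_chains_def hatU_def)
    moreover have "a = a'"
    proof (rule ccontr)
      assume "a \<noteq> a'"
      moreover have "a \<in> insert a' c'" "a' \<in> insert a c" using eq by auto
      ultimately have "a \<in> c'" "a' \<in> c" by auto
      then have "R a a'" "R a' a" using a a' by (auto simp: order_chains_def hatU_def)
      then show False using \<open>a \<noteq> a'\<close> finite_poset_antisym[OF po a(1) a'(1)] by blast
    qed
    ultimately show "a = a' \<and> c = c'" using eq by (metis insert_ident)
  qed
  show "?g ` ?S = ?N"
  proof
    show "?g ` ?S \<subseteq> ?N"
    proof clarsimp
      fix a c assume "a \<in> B" "c \<in> order_chains R (hatU B R a)"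
      then show "insert a c \<in> order_chains R B"
        using finite_poset_refl[OF po] by (auto simp: order_chains_def hatU_def)
    qed
    show "?N \<subseteq> ?g ` ?S"
    proof
      fix d assume "d \<in> ?N"
      then have d: "d \<in> order_chains R B" "d \<noteq> {}" by auto
      then obtain a where a: "a \<in> d" "\<forall>y\<in>d. R y a"
        using finite_chain_has_greatest[OF po] by blast
      have "d \<subseteq> B" using d(1) by (simp add: order_chains_def)
      then have "d - {a} \<in> order_chains R (hatU B R a)"
        using d(1) a(2) by (auto simp: order_chains_def hatU_def)
      then have "(a, d - {a}) \<in> ?S" using a(1) \<open>d \<subseteq> B\<close> by blast
      moreover have "d = ?g (a, d - {a})" using a(1) by auto
      ultimately show "d \<in> ?g ` ?S" by (rule rev_image_eqI)
    qed
  qed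
qed

lemma chain_sum_rec:
  assumes po: "finite_poset B R"
  shows "chain_sum R B = 1 - (\<Sum>a\<in>B. chain_sum R (hatU B R a))"
proof -
  let ?S = "SIGMA a:B. order_chains R (hatU B R a)"
  have fin: "finite B" using po finite_poset_finite by blast
  have "chain_sum R B = 1 + (\<Sum>c\<in>order_chains R B - {{}}. (-1) ^ card c)"
    unfolding chain_sum_def
    by (subst sum.remove[where x = "{}"]) (auto simp: finite_order_chains fin order_chains_def)
  also have "(\<Sum>c\<in>order_chains R B - {{}}. (-1::int) ^ card c) =
      (\<Sum>(a, c)\<in>?S. (-1) ^ card (insert a c))"
    using sum.reindex_bij_betw[OF bij_betw_insert_greatest[OF po], of "\<lambda>c. (-1::int) ^ card c"]
    by (simp add: case_prod_beta)
  also have "\<dots> = (\<Sum>(a, c)\<in>?S. - ((-1) ^ card c))"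
  proof (intro sum.cong refl, clarsimp)
    fix a c assume "a \<in> B" "c \<in> order_chains R (hatU B R a)"
    then have "finite c" "a \<notin> c" using fin by (auto simp: order_chains_def hatU_def intro: finite_subset)
    then show "(-1::int) ^ card (insert a c) = - ((-1) ^ card c)" by simp
  qed
  also have "\<dots> = - (\<Sum>a\<in>B. chain_sum R (hatU B R a))"
    unfolding chain_sum_def using fin
    by (subst sum.Sigma[symmetric]) (auto simp: finite_order_chains hatU_def sum_negf)
  finally show ?thesis by simp
qed

definition rising_perms :: "('a \<Rightarrow> 'a \<Rightarrow> bool) \<Rightarrow> 'a set \<Rightarrow> 'a set \<Rightarrow> ('a \<Rightarrow> 'a) set" where
  "rising_perms R S E = {p. p permutes S \<and> (\<forall>i\<in>S - E. R i (p i))}"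

lemma finite_rising_perms: "finite S \<Longrightarrow> finite (rising_perms R S E)"
  by (rule finite_subset[OF _ finite_permutations[of S]]) (auto simp: rising_perms_def)

text \<open>Along the cycle of \<open>i\<close> the values only go up, so they cannot come back unless \<open>p i = i\<close>.\<close>
lemma permutes_rising_eq_id:
  assumes po: "finite_poset S R" and p: "p permutes S" and rising: "\<forall>i\<in>S. R i (p i)"
  shows "p = id"
proof
  fix i
  show "p i = id i"
  proof (cases "i \<in> S")
    case False
    then show ?thesis using permutes_not_in[OF p] by simp
  next
    case True
    have pi: "p i \<in> S" using permutes_in_image[OF p] True by simp
    have "permutation p" using permutes_imp_permutation[OF finite_poset_finite[OF po] p] .
    then obtain n where n: "n > 0" "(p ^^ n) i = i" by (rule permutation_self)
    have up: "R (p i) ((p ^^ k) (p i))" for k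
    proof (induction k)
      case 0
      show ?case using finite_poset_refl[OF po pi] by simp
    next
      case (Suc k)
      let ?y = "(p ^^ k) (p i)"
      have y: "?y \<in> S" using permutes_in_funpow_image[OF p pi] .
      then have "p ?y \<in> S" and "R ?y (p ?y)" using permutes_in_image[OF p] rising by auto
      then have "R (p i) (p ?y)" using finite_poset_trans[OF po pi y] Suc.IH by blast
      then show ?case by simp
    qed
    have "(p ^^ (n - 1)) (p i) = (p ^^ n) i"
      using n(1) funpow_Suc_right[of "n - 1" p] by simp
    then have "R (p i) i" using up[of "n - 1"] n(2) by simp
    then show ?thesis using rising True finite_poset_antisym[OF po True pi] by simp
  qed
qed

lemma rising_perms_empty:
  assumes po: "finite_poset S R"
  shows "rising_perms R S {} = {id}"
proof -
  have "id \<in> rising_perms R S {}" using finite_poset_refl[OF po] by (simp add: rising_perms_def)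
  moreover have "p = id" if "p \<in> rising_perms R S {}" for p
    using that permutes_rising_eq_id[OF po] by (simp add: rising_perms_def)
  ultimately show ?thesis by blast
qed

lemma sign_compose_transpose:
  "permutation p \<Longrightarrow> a \<noteq> b \<Longrightarrow> sign (p \<circ> Transposition.transpose a b) = - sign p"
  by (simp add: sign_compose permutation_swap_id sign_swap_id)

text \<open>Composing with the transposition of two points of \<open>E\<close> is a sign-reversing involution.\<close>
lemma sum_sign_rising_perms_eq_0:
  assumes fin: "finite S" and E: "E \<subseteq> S" and ab: "a \<in> E" "b \<in> E" "a \<noteq> b"
  shows "(\<Sum>p\<in>rising_perms R S E. sign p) = 0"
proof -
  let ?\<tau> = "Transposition.transpose a b"
  have involution: "p \<circ> ?\<tau> \<circ> ?\<tau> = p" for p :: "'a \<Rightarrow> 'a" by (simp add: fun_eq_iff)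
  have closed: "p \<circ> ?\<tau> \<in> rising_perms R S E" and sign: "- sign (p \<circ> ?\<tau>) = sign p"
    if p: "p \<in> rising_perms R S E" for p
  proof -
    have pS: "p permutes S" using p by (simp add: rising_perms_def)
    have "p \<circ> ?\<tau> permutes S" using permutes_compose[OF permutes_swap_id pS] ab E by blast
    then show "p \<circ> ?\<tau> \<in> rising_perms R S E"
      using p ab by (auto simp: rising_perms_def Transposition.transpose_def)
    show "- sign (p \<circ> ?\<tau>) = sign p"
      using sign_compose_transpose[OF permutes_imp_permutation[OF fin pS] \<open>a \<noteq> b\<close>] by simp
  qed
  have "(\<Sum>p\<in>rising_perms R S E. sign p) = (\<Sum>p\<in>rising_perms R S E. - sign p)"
    by (rule sum.reindex_bij_witness[of _ "\<lambda>q. q \<circ> ?\<tau>" "\<lambda>p. p \<circ> ?\<tau>"])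
      (use involution closed sign in auto)
  then show ?thesis by (simp add: sum_negf)
qed

lemma rising_perms_fixing:
  assumes po: "finite_poset S R" and t: "t \<in> S"
  shows "{p \<in> rising_perms R S {t}. Hilbert_Choice.inv p t = t} = {id}"
proof -
  have "p = id" if "p \<in> rising_perms R S {t}" "Hilbert_Choice.inv p t = t" for p
  proof (rule permutes_rising_eq_id[OF po])
    show pS: "p permutes S" using that by (simp add: rising_perms_def)
    have "p t = t" using that(2) permutes_inv_eq[OF pS] by blast
    then show "\<forall>i\<in>S. R i (p i)" using that(1) finite_poset_refl[OF po t]
      by (auto simp: rising_perms_def)
  qed
  then show ?thesis using rising_perms_empty[OF po] by (auto simp: rising_perms_def)
qed

text \<open>Composing with the transposition of \<open>a\<close> and \<open>t\<close> turns a permutation sending \<open>a\<close> to \<open>t\<close>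
  into one fixing \<open>t\<close>.\<close>
lemma sum_sign_rising_perms_preimage:
  assumes fin: "finite S" and t: "t \<in> S" and a: "a \<in> hatU S R t"
  shows "(\<Sum>p | p \<in> rising_perms R S {t} \<and> Hilbert_Choice.inv p t = a. sign p) =
    - (\<Sum>q\<in>rising_perms R (S - {t}) {a}. sign q)"
proof -
  let ?\<tau> = "Transposition.transpose a t"
  let ?P = "{p. p \<in> rising_perms R S {t} \<and> Hilbert_Choice.inv p t = a}"
  let ?Q = "rising_perms R (S - {t}) {a}"
  have aS: "a \<in> S" and at: "a \<noteq> t" and Rat: "R a t" using a by (auto simp: hatU_def)
  have \<tau>: "?\<tau> permutes S" using permutes_swap_id[OF aS t] .
  have involution: "p \<circ> ?\<tau> \<circ> ?\<tau> = p" for p :: "'a \<Rightarrow> 'a" by (simp add: fun_eq_iff)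
  have to_Q: "p \<circ> ?\<tau> \<in> ?Q" and sign: "sign (p \<circ> ?\<tau>) = - sign p" if p: "p \<in> ?P" for p
  proof -
    have pS: "p permutes S" and rising: "\<forall>i\<in>S - {t}. R i (p i)"
      using p by (auto simp: rising_perms_def)
    have "p a = t" using p permutes_inv_eq[OF pS] by blast
    have "(p \<circ> ?\<tau>) t = t" using \<open>p a = t\<close> by simp
    then have "p \<circ> ?\<tau> permutes S - {t}"
      by (intro permutes_superset[OF permutes_compose[OF \<tau> pS]]) auto
    moreover have "\<forall>i\<in>S - {t} - {a}. R i ((p \<circ> ?\<tau>) i)"
      using rising by (simp add: Transposition.transpose_def)
    ultimately show "p \<circ> ?\<tau> \<in> ?Q" by (simp add: rising_perms_def)
    show "sign (p \<circ> ?\<tau>) = - sign p"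
      using sign_compose_transpose[OF permutes_imp_permutation[OF fin pS] at] .
  qed
  have to_P: "q \<circ> ?\<tau> \<in> ?P" if q: "q \<in> ?Q" for q
  proof -
    have qSt: "q permutes S - {t}" and rising: "\<forall>i\<in>S - {t} - {a}. R i (q i)"
      using q by (auto simp: rising_perms_def)
    have qS: "q permutes S" using permutes_subset[OF qSt] by blast
    have qt: "q t = t" using permutes_not_in[OF qSt] by blast
    have qS\<tau>: "q \<circ> ?\<tau> permutes S" using permutes_compose[OF \<tau> qS] .
    moreover have "Hilbert_Choice.inv (q \<circ> ?\<tau>) t = a" using permutes_inv_eq[OF qS\<tau>] qt by simp
    moreover have "\<forall>i\<in>S - {t}. R i ((q \<circ> ?\<tau>) i)"
      using rising qt Rat at by (auto simp: Transposition.transpose_def)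
    ultimately show ?thesis by (simp add: rising_perms_def)
  qed
  have "(\<Sum>p\<in>?P. sign p) = (\<Sum>q\<in>?Q. - sign q)"
    by (rule sum.reindex_bij_witness[of _ "\<lambda>q. q \<circ> ?\<tau>" "\<lambda>p. p \<circ> ?\<tau>"])
      (use involution to_Q to_P sign in auto)
  then show ?thesis by (simp add: sum_negf)
qed

lemma sum_sign_rising_perms_singleton_rec:
  assumes po: "finite_poset S R" and t: "t \<in> S"
  shows "(\<Sum>p\<in>rising_perms R S {t}. sign p) =
    1 - (\<Sum>a\<in>hatU S R t. \<Sum>q\<in>rising_perms R (S - {t}) {a}. sign q)"
proof -
  let ?P = "rising_perms R S {t}"
  have fin: "finite S" using po finite_poset_finite by blast
  have "Hilbert_Choice.inv p t \<in> insert t (hatU S R t)" if "p \<in> ?P" for p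
  proof -
    have pS: "p permutes S" and rising: "\<forall>i\<in>S - {t}. R i (p i)"
      using that by (auto simp: rising_perms_def)
    define y where "y = Hilbert_Choice.inv p t"
    have "y \<in> S" using permutes_in_image[OF permutes_inv[OF pS]] t y_def by blast
    moreover have "p y = t" using permutes_inverses(1)[OF pS] y_def by blast
    moreover have "R y (p y)" if "y \<noteq> t" using rising \<open>y \<in> S\<close> that by blast
    ultimately show ?thesis unfolding y_def[symmetric] by (auto simp: hatU_def)
  qed
  then have "(\<Sum>p\<in>?P. sign p) = (\<Sum>y\<in>insert t (hatU S R t). \<Sum>p | p \<in> ?P \<and> Hilbert_Choice.inv p t = y. sign p)"
    by (intro sum.group[symmetric]) (auto simp: fin finite_rising_perms hatU_def)
  also have "\<dots> = (\<Sum>p | p \<in> ?P \<and> Hilbert_Choice.inv p t = t. sign p) +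
      (\<Sum>a\<in>hatU S R t. \<Sum>p | p \<in> ?P \<and> Hilbert_Choice.inv p t = a. sign p)"
    using fin by (intro sum.insert) (auto simp: hatU_def)
  also have "\<dots> = 1 - (\<Sum>a\<in>hatU S R t. \<Sum>q\<in>rising_perms R (S - {t}) {a}. sign q)"
    using rising_perms_fixing[OF po t] sum_sign_rising_perms_preimage[OF fin t]
    by (simp add: sum_negf)
  finally show ?thesis .
qed

lemma hatU_Diff_eq_hatU_hatU:
  assumes po: "finite_poset S R" and t: "t \<in> S" and a: "a \<in> hatU S R t"
  shows "hatU (S - {t}) R a = hatU (hatU S R t) R a"
proof -
  have "a \<in> S" "R a t" using a by (auto simp: hatU_def)
  then have "R y t" if "y \<in> S" "R y a" for y using finite_poset_trans[OF po that(1) _ t] that(2) by blast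
  then show ?thesis by (auto simp: hatU_def)
qed

lemma sum_sign_rising_perms_singleton:
  "finite_poset S R \<Longrightarrow> t \<in> S \<Longrightarrow> (\<Sum>p\<in>rising_perms R S {t}. sign p) = chain_sum R (hatU S R t)"
proof (induction "card S" arbitrary: S t rule: less_induct)
  case less
  note po = less.prems(1) and t = less.prems(2)
  have fin: "finite S" using po finite_poset_finite by blast
  have IH: "(\<Sum>q\<in>rising_perms R (S - {t}) {a}. sign q) = chain_sum R (hatU (hatU S R t) R a)"
    if a: "a \<in> hatU S R t" for a
  proof -
    have "card (S - {t}) < card S" using fin t by (rule card_Diff1_less)
    moreover have "finite_poset (S - {t}) R" using po finite_poset_subset by blast
    moreover have "a \<in> S - {t}" using a by (auto simp: hatU_def)
    ultimately show ?thesis using less.hyps hatU_Diff_eq_hatU_hatU[OF po t a] by metis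
  qed
  have "finite_poset (hatU S R t) R" using finite_poset_subset[OF po] by (simp add: hatU_def)
  then have "chain_sum R (hatU S R t) = 1 - (\<Sum>a\<in>hatU S R t. chain_sum R (hatU (hatU S R t) R a))"
    by (rule chain_sum_rec)
  then show ?case using sum_sign_rising_perms_singleton_rec[OF po t] IH by simp
qed

lemma sum_Pow_eq_singletons:
  assumes fin: "finite S"
    and vanish: "\<And>T a b. T \<subseteq> S \<Longrightarrow> a \<in> T \<Longrightarrow> b \<in> T \<Longrightarrow> a \<noteq> b \<Longrightarrow> g T = 0"
  shows "sum g (Pow S) = g {} + (\<Sum>t\<in>S. g {t})"
proof -
  let ?A = "insert {} ((\<lambda>t. {t}) ` S)"
  have "sum g (Pow S) = sum g ?A"
  proof (rule sum.mono_neutral_right)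
    show "\<forall>T\<in>Pow S - ?A. g T = 0"
    proof
      fix T assume T: "T \<in> Pow S - ?A"
      then have "T \<noteq> {}" "\<forall>t. T \<noteq> {t}" by auto
      then obtain a b where "a \<in> T" "b \<in> T" "a \<noteq> b" by blast
      then show "g T = 0" using vanish T by blast
    qed
  qed (use fin in auto)
  also have "\<dots> = g {} + (\<Sum>t\<in>S. g {t})"
    using fin by (subst sum.insert) (auto simp: sum.reindex inj_on_def)
  finally show ?thesis .
qed

lemma prod_if_neg_one_zero:
  "finite A \<Longrightarrow> (\<Prod>i\<in>A. if P i then -1 else 0::int) = (if \<forall>i\<in>A. P i then (-1) ^ card A else 0)"
  by (induction A rule: finite_induct) auto

lemma prod_if_zero_one_expand:
  assumes fin: "finite S"
  shows "(\<Prod>i\<in>S. if P i then 0 else 1::int) =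
    (\<Sum>T\<in>Pow S. if \<forall>i\<in>S - T. P i then (-1) ^ card (S - T) else 0)"
proof -
  have "(\<Prod>i\<in>S. if P i then 0 else 1::int) = (\<Prod>i\<in>S. 1 + (if P i then -1 else 0))"
    by (intro prod.cong) auto
  also have "\<dots> = (\<Sum>T\<in>Pow S. if \<forall>i\<in>S - T. P i then (-1) ^ card (S - T) else 0)"
    using fin by (simp add: prod_add prod_if_neg_one_zero)
  finally show ?thesis .
qed

lemma sum_permutes_if_rising:
  assumes fin: "finite S"
  shows "(\<Sum>p | p permutes S. if \<forall>i\<in>S - T. R i (p i) then c * sign p else 0) =
    c * (\<Sum>p\<in>rising_perms R S T. sign p)"
proof -
  have "(\<Sum>p | p permutes S. if \<forall>i\<in>S - T. R i (p i) then c * sign p else 0) =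
      (\<Sum>p\<in>rising_perms R S T. c * sign p)"
    unfolding rising_perms_def
    using sum.inter_filter[OF finite_permutations[OF fin], of "\<lambda>p. c * sign p"] by simp
  then show ?thesis by (simp add: sum_distrib_left)
qed

text \<open>Writing each entry as \<open>1 + (-[i \<le> j])\<close> and expanding the product expresses the Leibniz sum
  through the signed counts of \<open>rising_perms R S T\<close>; these vanish unless \<open>card T \<le> 1\<close>.\<close>
lemma sum_permutes_sign_prod_incomparable:
  assumes po: "finite_poset S R"
  shows "(\<Sum>p | p permutes S. sign p * (\<Prod>i\<in>S. if R i (p i) then 0 else 1)) =
    (-1) ^ card S * chain_sum R S"
proof -
  have fin: "finite S" using po finite_poset_finite by blast
  let ?W = "\<lambda>T. \<Sum>p\<in>rising_perms R S T. sign p"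
  have "(\<Sum>p | p permutes S. sign p * (\<Prod>i\<in>S. if R i (p i) then 0 else 1)) =
      (\<Sum>T\<in>Pow S. \<Sum>p | p permutes S. if \<forall>i\<in>S - T. R i (p i) then (-1) ^ card (S - T) * sign p else 0)"
    unfolding prod_if_zero_one_expand[OF fin] sum_distrib_left
    by (subst sum.swap) (intro sum.cong refl, simp)
  also have "\<dots> = (\<Sum>T\<in>Pow S. (-1) ^ card (S - T) * ?W T)"
    using sum_permutes_if_rising[OF fin] by simp
  also have "\<dots> = (-1) ^ card S * ?W {} + (\<Sum>t\<in>S. (-1) ^ card (S - {t}) * ?W {t})"
    using sum_sign_rising_perms_eq_0[OF fin] by (subst sum_Pow_eq_singletons[OF fin]) auto
  also have "\<dots> = (-1) ^ card S * (1 - (\<Sum>t\<in>S. chain_sum R (hatU S R t)))"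
  proof -
    have "(-1) ^ card (S - {t}) * ?W {t} = - ((-1) ^ card S * chain_sum R (hatU S R t))"
      if t: "t \<in> S" for t
    proof -
      have "card S = Suc (card (S - {t}))" using card_Suc_Diff1[OF fin t] by simp
      then show ?thesis using sum_sign_rising_perms_singleton[OF po t] by simp
    qed
    then show ?thesis
      using rising_perms_empty[OF po] by (simp add: sum_negf sum_distrib_left algebra_simps)
  qed
  also have "\<dots> = (-1) ^ card S * chain_sum R S" using chain_sum_rec[OF po] by simp
  finally show ?thesis .
qed

lemma poset_matrix_carrier: "poset_matrix R n f \<in> carrier_mat n n"
  by (simp add: poset_matrix_def)

lemma det_poset_matrix:
  assumes po: "finite_poset X R" and f: "bij_betw f {0..<card X} X"
  shows "det (poset_matrix R (card X) f) = (-1) ^ card X * chain_sum R X"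
proof -
  let ?n = "card X" and ?R = "\<lambda>i j. R (f i) (f j)"
  have "det (poset_matrix R ?n f) =
      (\<Sum>p | p permutes {0..<?n}. sign p * (\<Prod>i\<in>{0..<?n}. if ?R i (p i) then 0 else 1))"
    unfolding det_def'[OF poset_matrix_carrier]
  proof (intro sum.cong refl)
    fix p assume "p \<in> {p. p permutes {0..<?n}}"
    then have "p i < ?n" if "i < ?n" for i using that permutes_in_image by fastforce
    then have "(\<Prod>i = 0..<?n. poset_matrix R ?n f $$ (i, p i)) =
        (\<Prod>i\<in>{0..<?n}. if ?R i (p i) then 0 else 1)"
      by (intro prod.cong) (simp_all add: poset_matrix_def)
    then show "signof p * (\<Prod>i = 0..<?n. poset_matrix R ?n f $$ (i, p i)) =
        sign p * (\<Prod>i\<in>{0..<?n}. if ?R i (p i) then 0 else 1)" by simp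
  qed
  also have "\<dots> = (-1) ^ ?n * chain_sum ?R {0..<?n}"
    using sum_permutes_sign_prod_incomparable[OF finite_poset_bij_betw[OF f po]] by simp
  also have "\<dots> = (-1) ^ ?n * chain_sum R X" using chain_sum_bij_betw[OF f] by simp
  finally show ?thesis .
qed

lemma openin_poset_topology:
  "openin (poset_topology X R) U \<longleftrightarrow> U \<subseteq> X \<and> (\<forall>y\<in>U. \<forall>z\<in>X. R z y \<longrightarrow> z \<in> U)"
proof -
  have "istopology (\<lambda>U. U \<subseteq> X \<and> (\<forall>y\<in>U. \<forall>z\<in>X. R z y \<longrightarrow> z \<in> U))"
    unfolding istopology_def by blast
  then show ?thesis unfolding poset_topology_def by simp
qed

lemma topspace_poset_topology: "topspace (poset_topology X R) = X"
proof -
  have "openin (poset_topology X R) X" unfolding openin_poset_topology by blast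
  then have "X \<subseteq> topspace (poset_topology X R)" by (rule openin_subset)
  moreover have "topspace (poset_topology X R) \<subseteq> X"
    unfolding topspace_def openin_poset_topology by blast
  ultimately show ?thesis by blast
qed

lemma openin_poset_subtopology_down_set:
  assumes po: "finite_poset X R" and A: "A \<subseteq> X" and y: "y \<in> X"
  shows "openin (subtopology (poset_topology X R) A) {w\<in>A. R w y}"
proof -
  have "openin (poset_topology X R) {w\<in>X. R w y}"
    unfolding openin_poset_topology using finite_poset_trans[OF po _ _ y] by blast
  moreover have "{w\<in>A. R w y} = {w\<in>X. R w y} \<inter> A" using A by blast
  ultimately show ?thesis unfolding openin_subtopology by blast
qed

lemma openin_poset_subtopology_down_closed:
  assumes A: "A \<subseteq> X" and V: "openin (subtopology (poset_topology X R) A) V"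
    and "z \<in> V" "y \<in> A" "R y z"
  shows "y \<in> V"
  using assms unfolding openin_subtopology openin_poset_topology by blast

lemma continuous_map_poset_mono:
  assumes po: "finite_poset X R" and A: "A \<subseteq> X"
    and g: "continuous_map (subtopology (poset_topology X R) A) (subtopology (poset_topology X R) A) g"
    and xy: "x \<in> A" "y \<in> A" "R x y"
  shows "R (g x) (g y)"
proof -
  let ?T = "subtopology (poset_topology X R) A"
  have top: "topspace ?T = A" using A by (simp add: topspace_poset_topology Int_absorb1)
  then have gA: "g ` A \<subseteq> A" using g continuous_map_image_subset_topspace by metis
  let ?V = "{w \<in> topspace ?T. g w \<in> {u\<in>A. R u (g y)}}"
  have "openin ?T ?V"
    using openin_continuous_map_preimage[OF g openin_poset_subtopology_down_set[OF po A]] gA xy A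
    by blast
  moreover have "y \<in> ?V" using top gA xy finite_poset_refl[OF po] A by auto
  ultimately have "x \<in> ?V" using openin_poset_subtopology_down_closed[OF A] xy by blast
  then show ?thesis by simp
qed

definition comparable_maps :: "('a \<Rightarrow> 'a \<Rightarrow> bool) \<Rightarrow> 'a set \<Rightarrow> ('a \<Rightarrow> 'a) \<Rightarrow> ('a \<Rightarrow> 'a) \<Rightarrow> bool" where
  "comparable_maps R A f g \<longleftrightarrow> f ` A \<subseteq> A \<and> g ` A \<subseteq> A \<and>
     (\<forall>x\<in>A. \<forall>y\<in>A. R x y \<longrightarrow> R (f x) (f y)) \<and> (\<forall>x\<in>A. \<forall>y\<in>A. R x y \<longrightarrow> R (g x) (g y)) \<and>
     ((\<forall>y\<in>A. R (f y) (g y)) \<or> (\<forall>y\<in>A. R (g y) (f y)))"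

text \<open>The combinatorial form of a contraction of a finite space.\<close>
definition fence_contractible :: "('a \<Rightarrow> 'a \<Rightarrow> bool) \<Rightarrow> 'a set \<Rightarrow> bool" where
  "fence_contractible R A \<longleftrightarrow> (\<exists>a\<in>A. \<exists>f g. (comparable_maps R A)\<^sup>*\<^sup>* f g \<and>
     (\<forall>y\<in>A. f y = y) \<and> (\<forall>y\<in>A. g y = a))"

lemma comparable_maps_conversep [simp]: "comparable_maps R\<inverse>\<inverse> A = comparable_maps R A"
  unfolding comparable_maps_def by (intro ext) auto

lemma fence_contractible_conversep [simp]: "fence_contractible R\<inverse>\<inverse> A = fence_contractible R A"
  by (simp add: fence_contractible_def)

text \<open>The down-set of each \<open>h (t, y)\<close> is open and \<open>A\<close> is finite.\<close>
lemma homotopy_locally_below: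
  fixes h :: "real \<times> 'a \<Rightarrow> 'a"
  assumes po: "finite_poset X R" and A: "A \<subseteq> X" "A \<noteq> {}"
    and h: "continuous_map (prod_topology (top_of_set {0..1}) (subtopology (poset_topology X R) A))
      (subtopology (poset_topology X R) A) h"
    and t: "t \<in> {0..1}"
  shows "\<exists>V. openin (top_of_set {0..1}) V \<and> t \<in> V \<and> (\<forall>s\<in>V. \<forall>y\<in>A. R (h (s, y)) (h (t, y)))"
proof -
  let ?T = "subtopology (poset_topology X R) A" and ?I = "top_of_set {0..1::real}"
  have finA: "finite A" using po A finite_poset_finite finite_subset by blast
  have h_y: "continuous_map ?I ?T (\<lambda>s. h (s, y))" if "y \<in> A" for y
    using continuous_map_compose[OF continuous_map_pairedI[of ?I ?I id ?T "\<lambda>_. y"] h] that A(1)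
    by (auto simp: o_def topspace_poset_topology)
  have "topspace ?T = A" using A(1) by (simp add: topspace_poset_topology Int_absorb1)
  then have hA: "h (t, y) \<in> A" if "y \<in> A" for y
    using continuous_map_image_subset_topspace[OF h] that t by (auto simp: image_subset_iff)
  define V where "V = (\<Inter>y\<in>A. {s \<in> topspace ?I. h (s, y) \<in> {w\<in>A. R w (h (t, y))}})"
  have "openin ?I V" unfolding V_def
  proof (rule openin_INT2[OF finA A(2)])
    fix y assume y: "y \<in> A"
    then have "h (t, y) \<in> X" using hA A(1) by blast
    then show "openin ?I {s \<in> topspace ?I. h (s, y) \<in> {w\<in>A. R w (h (t, y))}}"
      by (rule openin_continuous_map_preimage[OF h_y[OF y]
            openin_poset_subtopology_down_set[OF po A(1)]])
  qed
  moreover have "t \<in> V" unfolding V_def using t hA finite_poset_refl[OF po] A(1) by auto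
  moreover have "\<forall>s\<in>V. \<forall>y\<in>A. R (h (s, y)) (h (t, y))" unfolding V_def by blast
  ultimately show ?thesis by blast
qed

text \<open>Connectedness of \<open>[0, 1]\<close> links \<open>h\<^sub>0\<close> and \<open>h\<^sub>1\<close> by a fence, as nearby \<open>h\<^sub>s\<close> are comparable.\<close>
lemma contractible_imp_fence_contractible:
  assumes po: "finite_poset X R" and A: "A \<subseteq> X" "A \<noteq> {}"
    and contr: "contractible_space (subtopology (poset_topology X R) A)"
  shows "fence_contractible R A"
proof -
  let ?T = "subtopology (poset_topology X R) A" and ?I = "top_of_set {0..1::real}"
  have top: "topspace ?T = A" using A by (simp add: topspace_poset_topology Int_absorb1)
  obtain a h where h: "continuous_map (prod_topology ?I ?T) ?T h"
    and h0: "\<forall>x. h (0, x) = x" and h1: "\<forall>x. h (1, x) = a"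
    using contr unfolding contractible_space_def homotopic_with_def by auto
  have h_s: "continuous_map ?T ?T (\<lambda>x. h (s, x))" if "s \<in> {0..1}" for s
    using continuous_map_compose[OF continuous_map_pairedI[of ?T ?I "\<lambda>_. s" ?T id] h] that
    by (simp add: o_def)
  have hA: "h (s, y) \<in> A" if "s \<in> {0..1}" "y \<in> A" for s y
    using h_s[OF that(1)] that(2) top continuous_map_image_subset_topspace by fastforce
  have cmp: "comparable_maps R A (\<lambda>x. h (t, x)) (\<lambda>x. h (s, x))"
    if t: "t \<in> {0..1}" and s: "s \<in> {0..1}" and le: "\<forall>y\<in>A. R (h (s, y)) (h (t, y))" for s t
  proof -
    have "(\<lambda>x. h (t, x)) ` A \<subseteq> A" "(\<lambda>x. h (s, x)) ` A \<subseteq> A" using hA t s by auto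
    moreover have "\<forall>x\<in>A. \<forall>y\<in>A. R x y \<longrightarrow> R (h (t, x)) (h (t, y))"
      "\<forall>x\<in>A. \<forall>y\<in>A. R x y \<longrightarrow> R (h (s, x)) (h (s, y))"
      using continuous_map_poset_mono[OF po A(1) h_s[OF t]]
        continuous_map_poset_mono[OF po A(1) h_s[OF s]] by blast+
    ultimately show ?thesis using le unfolding comparable_maps_def by blast
  qed
  define Rel where "Rel s t \<longleftrightarrow> (comparable_maps R A)\<^sup>*\<^sup>* (\<lambda>x. h (s, x)) (\<lambda>x. h (t, x))" for s t
  have "symp (comparable_maps R A)" by (rule sympI) (auto simp: comparable_maps_def)
  then have sym: "symp (comparable_maps R A)\<^sup>*\<^sup>*" by (rule symp_rtranclp)
  have "Rel 0 1"
  proof (rule connected_equivalence_relation[of "{0..1::real}"])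
    show "Rel y x" if "Rel x y" for x y using sympD[OF sym] that unfolding Rel_def by blast
    show "Rel x z" if "Rel x y" "Rel y z" for x y z using that unfolding Rel_def by simp
    fix t :: real assume t: "t \<in> {0..1}"
    then obtain V where V: "openin ?I V" "t \<in> V" and below: "\<forall>s\<in>V. \<forall>y\<in>A. R (h (s, y)) (h (t, y))"
      using homotopy_locally_below[OF po A h] by blast
    have "Rel t s" if "s \<in> V" for s
    proof -
      have "s \<in> {0..1}" using openin_subset[OF V(1)] that by auto
      then show ?thesis using cmp[OF t] below that unfolding Rel_def by blast
    qed
    then show "\<exists>V. openin ?I V \<and> t \<in> V \<and> (\<forall>s\<in>V. Rel t s)" using V by blast
  qed auto
  moreover obtain y where "y \<in> A" using A(2) by blast
  then have "a \<in> A" using hA[of 1 y] h1 by simp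
  ultimately show ?thesis unfolding fence_contractible_def Rel_def using h0 h1 by auto
qed

definition down_beat_point :: "('a \<Rightarrow> 'a \<Rightarrow> bool) \<Rightarrow> 'a set \<Rightarrow> 'a \<Rightarrow> bool" where
  "down_beat_point R A b \<longleftrightarrow> b \<in> A \<and> (\<exists>b'\<in>hatU A R b. \<forall>z\<in>hatU A R b. R z b')"

lemma chain_sum_remove_down_beat_point:
  assumes po: "finite_poset A R" and b: "down_beat_point R A b"
  shows "chain_sum R (A - {b}) = chain_sum R A"
proof -
  obtain b' where b': "b' \<in> hatU A R b" "\<forall>z\<in>hatU A R b. R z b'"
    using b by (auto simp: down_beat_point_def)
  have "finite (hatU A R b)" using finite_poset_finite[OF po] by (simp add: hatU_def)
  then have "chain_sum R (hatU A R b) = 0" by (rule chain_sum_cone[OF _ b'(1)]) (use b'(2) in blast)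
  moreover have "b \<in> A" using b by (simp add: down_beat_point_def)
  ultimately show ?thesis using chain_sum_remove_point[OF po] by simp
qed

lemma comparable_maps_compose_retraction:
  assumes sub: "A' \<subseteq> A" and r: "r ` A \<subseteq> A'"
    and r_mono: "\<And>x y. x \<in> A \<Longrightarrow> y \<in> A \<Longrightarrow> R x y \<Longrightarrow> R (r x) (r y)"
    and h: "comparable_maps R A h h'"
  shows "comparable_maps R A' (r \<circ> h) (r \<circ> h')"
proof -
  have hA: "h x \<in> A" "h' x \<in> A" if "x \<in> A'" for x
    using h sub that unfolding comparable_maps_def by auto
  have mono: "R (r (k x)) (r (k y))"
    if "k ` A \<subseteq> A" "\<forall>x\<in>A. \<forall>y\<in>A. R x y \<longrightarrow> R (k x) (k y)" "x \<in> A'" "y \<in> A'" "R x y" for k x y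
  proof (rule r_mono)
    have "x \<in> A" "y \<in> A" using that(3,4) sub by auto
    then show "k x \<in> A" "k y \<in> A" "R (k x) (k y)" using that(1,2,5) by auto
  qed
  have "(\<forall>y\<in>A'. R (r (h y)) (r (h' y))) \<or> (\<forall>y\<in>A'. R (r (h' y)) (r (h y)))"
    using h sub hA r_mono unfolding comparable_maps_def by (meson subsetD)
  then show ?thesis
    using h r hA mono[of h] mono[of h'] unfolding comparable_maps_def by auto
qed

lemma fence_contractible_retract:
  assumes sub: "A' \<subseteq> A" and r: "r ` A \<subseteq> A'"
    and r_mono: "\<And>x y. x \<in> A \<Longrightarrow> y \<in> A \<Longrightarrow> R x y \<Longrightarrow> R (r x) (r y)"
    and r_id: "\<And>y. y \<in> A' \<Longrightarrow> r y = y" and fence: "fence_contractible R A"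
  shows "fence_contractible R A'"
proof -
  obtain a f g where a: "a \<in> A" and fg: "(comparable_maps R A)\<^sup>*\<^sup>* f g"
    and f: "\<forall>y\<in>A. f y = y" and g: "\<forall>y\<in>A. g y = a"
    using fence by (auto simp: fence_contractible_def)
  from fg have "(comparable_maps R A')\<^sup>*\<^sup>* (r \<circ> f) (r \<circ> g)"
  proof (induction rule: rtranclp_induct)
    case (step h h')
    have "comparable_maps R A' (r \<circ> h) (r \<circ> h')"
      using comparable_maps_compose_retraction[OF sub r r_mono step.hyps(2)] .
    with step.IH show ?case by (meson rtranclp.rtrancl_into_rtrancl)
  qed simp
  moreover have "r a \<in> A'" using r a by blast
  moreover have "\<forall>y\<in>A'. (r \<circ> f) y = y" using f r_id sub by auto
  moreover have "\<forall>y\<in>A'. (r \<circ> g) y = r a" using g sub by auto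
  ultimately show ?thesis unfolding fence_contractible_def by blast
qed

text \<open>Sending a down beat point \<open>b\<close> to the maximum \<open>b'\<close> of \<open>hatU A R b\<close> is an order-preserving
  retraction onto \<open>A - {b}\<close>.\<close>
lemma fence_contractible_remove_down_beat_point:
  assumes po: "finite_poset A R" and b: "down_beat_point R A b" and fence: "fence_contractible R A"
  shows "fence_contractible R (A - {b})"
proof -
  obtain b' where b': "b' \<in> hatU A R b" "\<forall>z\<in>hatU A R b. R z b'"
    using b by (auto simp: down_beat_point_def)
  have bA: "b \<in> A" and b'A: "b' \<in> A" "b' \<noteq> b" "R b' b"
    using b b' by (auto simp: down_beat_point_def hatU_def)
  define r where "r y = (if y = b then b' else y)" for y
  have r_mono: "R (r x) (r y)" if xy: "x \<in> A" "y \<in> A" "R x y" for x y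
  proof -
    consider "x = b" "y = b" | "x = b" "y \<noteq> b" | "x \<noteq> b" "y = b" | "x \<noteq> b" "y \<noteq> b" by blast
    then show ?thesis
    proof cases
      case 1
      then show ?thesis using finite_poset_refl[OF po b'A(1)] by (simp add: r_def)
    next
      case 2
      then show ?thesis using finite_poset_trans[OF po b'A(1) bA xy(2) b'A(3)] xy by (simp add: r_def)
    next
      case 3
      then show ?thesis using b'(2) xy by (simp add: r_def hatU_def)
    qed (simp_all add: r_def xy)
  qed
  have "r ` A \<subseteq> A - {b}" using b'A unfolding r_def by auto
  then show ?thesis
    by (rule fence_contractible_retract[OF Diff_subset _ r_mono _ fence]) (auto simp: r_def)
qed

text \<open>Induction on the size of the down-set of \<open>y\<close>: if \<open>g\<close> fixes everything below \<open>y\<close> but not \<open>y\<close>,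
  then \<open>g y\<close> is the maximum of \<open>hatU A R y\<close>.\<close>
lemma below_id_eq_id_without_down_beat_points:
  assumes po: "finite_poset A R" and gA: "g ` A \<subseteq> A"
    and mono: "\<And>x y. x \<in> A \<Longrightarrow> y \<in> A \<Longrightarrow> R x y \<Longrightarrow> R (g x) (g y)"
    and below: "\<And>y. y \<in> A \<Longrightarrow> R (g y) y" and no_beat: "\<And>b. \<not> down_beat_point R A b"
    and y: "y \<in> A"
  shows "g y = y"
  using y
proof (induction "card {z\<in>A. R z y}" arbitrary: y rule: less_induct)
  case less
  have fixed: "g z = z" if z: "z \<in> hatU A R y" for z
  proof (rule less.hyps)
    have zA: "z \<in> A" "R z y" "z \<noteq> y" using z by (auto simp: hatU_def)
    have "{w\<in>A. R w z} \<subseteq> {w\<in>A. R w y}"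
      using finite_poset_trans[OF po _ zA(1) less.prems _ zA(2)] by blast
    moreover have "y \<notin> {w\<in>A. R w z}" "y \<in> {w\<in>A. R w y}"
      using finite_poset_antisym[OF po zA(1) less.prems zA(2)] zA(3)
        finite_poset_refl[OF po less.prems] less.prems by auto
    moreover have "finite {w\<in>A. R w y}" using finite_poset_finite[OF po] by simp
    ultimately show "card {w\<in>A. R w z} < card {w\<in>A. R w y}"
      by (intro psubset_card_mono psubsetI) blast+
    show "z \<in> A" using zA(1) .
  qed
  show ?case
  proof (rule ccontr)
    assume "g y \<noteq> y"
    moreover have "g y \<in> A" "R (g y) y" using gA below less.prems by auto
    ultimately have "g y \<in> hatU A R y" by (simp add: hatU_def)
    moreover have "R z (g y)" if z: "z \<in> hatU A R y" for z
    proof -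
      have "z \<in> A" "R z y" using z by (auto simp: hatU_def)
      then have "R (g z) (g y)" using mono less.prems by blast
      then show ?thesis using fixed[OF z] by simp
    qed
    ultimately have "down_beat_point R A y" using less.prems by (auto simp: down_beat_point_def)
    then show False using no_beat by blast
  qed
qed

lemma comparable_id_eq_id_without_beat_points:
  assumes po: "finite_poset A R" and h: "comparable_maps R A f g" and f: "\<forall>y\<in>A. f y = y"
    and no_beat: "\<And>b. \<not> down_beat_point R A b" "\<And>b. \<not> down_beat_point R\<inverse>\<inverse> A b"
    and y: "y \<in> A"
  shows "g y = y"
proof -
  have gA: "g ` A \<subseteq> A" and mono: "\<And>x y. x \<in> A \<Longrightarrow> y \<in> A \<Longrightarrow> R x y \<Longrightarrow> R (g x) (g y)"
    using h by (auto simp: comparable_maps_def)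
  have "(\<forall>y\<in>A. R (f y) (g y)) \<or> (\<forall>y\<in>A. R (g y) (f y))" using h by (simp add: comparable_maps_def)
  then have "(\<forall>y\<in>A. R y (g y)) \<or> (\<forall>y\<in>A. R (g y) y)" using f by simp
  then show ?thesis
  proof
    assume up: "\<forall>y\<in>A. R y (g y)"
    show ?thesis
      by (rule below_id_eq_id_without_down_beat_points[of A "R\<inverse>\<inverse>" g])
        (use po gA mono no_beat(2) y up in auto)
  next
    assume down: "\<forall>y\<in>A. R (g y) y"
    show ?thesis
      by (rule below_id_eq_id_without_down_beat_points[OF po gA mono]) (use no_beat(1) y down in auto)
  qed
qed

lemma fence_contractible_without_beat_points:
  assumes po: "finite_poset A R" and fence: "fence_contractible R A"
    and no_beat: "\<And>b. \<not> down_beat_point R A b" "\<And>b. \<not> down_beat_point R\<inverse>\<inverse> A b"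
  shows "\<exists>a. A = {a}"
proof -
  obtain a f g where a: "a \<in> A" and fg: "(comparable_maps R A)\<^sup>*\<^sup>* f g"
    and f: "\<forall>y\<in>A. f y = y" and g: "\<forall>y\<in>A. g y = a"
    using fence unfolding fence_contractible_def by blast
  have "\<forall>y\<in>A. g y = y"
    using fg
  proof (induction rule: rtranclp_induct)
    case (step h h')
    have "h' y = y" if "y \<in> A" for y
      using comparable_id_eq_id_without_beat_points[OF po step.hyps(2) step.IH no_beat that] .
    then show ?case by blast
  qed (use f in simp)
  then have "y = a" if "y \<in> A" for y using that g by metis
  then have "A = {a}" using a by blast
  then show ?thesis by blast
qed

lemma fence_contractible_chain_sum:
  "finite_poset A R \<Longrightarrow> fence_contractible R A \<Longrightarrow> chain_sum R A = 0"
proof (induction "card A" arbitrary: A R rule: less_induct)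
  case less
  note po = less.prems(1) and fence = less.prems(2)
  have shrink: "chain_sum R' A = 0"
    if b: "down_beat_point R' A b" and po': "finite_poset A R'" and fence': "fence_contractible R' A"
    for R' b
  proof -
    have "b \<in> A" using b by (simp add: down_beat_point_def)
    then have "card (A - {b}) < card A" by (rule card_Diff1_less[OF finite_poset_finite[OF po']])
    then have "chain_sum R' (A - {b}) = 0"
      using less.hyps finite_poset_subset[OF po'] fence_contractible_remove_down_beat_point[OF po' b fence']
      by blast
    then show ?thesis using chain_sum_remove_down_beat_point[OF po' b] by simp
  qed
  consider b where "down_beat_point R A b" | b where "down_beat_point R\<inverse>\<inverse> A b"
    | "\<And>b. \<not> down_beat_point R A b" "\<And>b. \<not> down_beat_point R\<inverse>\<inverse> A b" by blast
  then show ?case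
  proof cases
    case 1
    then show ?thesis using shrink po fence by blast
  next
    case 2
    then show ?thesis using shrink[of "R\<inverse>\<inverse>"] po fence by simp
  next
    case 3
    then obtain a where "A = {a}" using fence_contractible_without_beat_points[OF po fence] by blast
    then show ?thesis using finite_poset_refl[OF po] by (intro chain_sum_cone) auto
  qed
qed

lemma contractible_sub_chain_sum:
  assumes po: "finite_poset X R" and A: "A \<subseteq> X" and contr: "contractible_sub X R A"
  shows "chain_sum R A = 0"
proof (rule fence_contractible_chain_sum)
  show "finite_poset A R" using finite_poset_subset[OF po A] .
  show "fence_contractible R A"
    using contractible_imp_fence_contractible[OF po A] contr by (simp add: contractible_sub_def)
qed

theorem mainTheorem5:
  fixes X :: "'a set" and leq :: "'a \<Rightarrow> 'a \<Rightarrow> bool" and x :: 'a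
    and f g :: "nat \<Rightarrow> 'a"
  assumes "finite_poset X leq"
    and "weak_beat_point X leq x"
    and "bij_betw f {0..<card X} X"
    and "bij_betw g {0..<card (X - {x})} (X - {x})"
  shows "det (poset_matrix leq (card X) f) = - det (poset_matrix leq (card (X - {x})) g)"
proof -
  note po = assms(1)
  have x: "x \<in> X"
    using assms(2) by (auto simp: weak_beat_point_def down_weak_beat_point_def up_weak_beat_point_def)
  have "chain_sum leq (hatU X leq x) = 0 \<or> chain_sum leq (hatF X leq x) = 0"
    using assms(2) contractible_sub_chain_sum[OF po]
    by (auto simp: weak_beat_point_def down_weak_beat_point_def up_weak_beat_point_def hatU_def hatF_def)
  then have "chain_sum leq X = chain_sum leq (X - {x})"
    using chain_sum_remove_point[OF po x] by auto
  moreover have "card X = Suc (card (X - {x}))"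
    using card_Suc_Diff1[OF finite_poset_finite[OF po] x] by simp
  ultimately show ?thesis
    using det_poset_matrix[OF po assms(3)] det_poset_matrix[OF finite_poset_subset[OF po Diff_subset] assms(4)]
    by simp
qed

end
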